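(* Let $\Pi=\{R_1,\dots,R_n\}$ be a logic program and let $\mathbb{P}_\Pi$ be the $\mathrm{LP}^{\mathrm{MLN}}$ program $\{\alpha:R_1,\dots,\alpha:R_n\}$. The (deterministic) stable models of $\Pi$ are exactly the (probabilistic) stable models $I$ of $\mathbb{P}_\Pi$ with $W_{\mathbb{P}_\Pi}(I)=e^{k\alpha}$, where $k$ is the number of all ground rules of $\Pi$. Moreover, if $\Pi$ has at least one stable model, then all (probabilistic) stable models of $\mathbb{P}_\Pi$ have the same probability, and are thus the stable models of $\Pi$ as well.
   Context: Fix a first-order signature $\sigma$ with no function constants of positive arity; Herbrand interpretations are identified with sets of ground atoms. A formula is negative if every occurrence of every atom is in the scope of negation. A rule has the form $A\leftarrow B\wedge N$ ($A$ a possibly empty disjunction of atoms, $B$ a conjunction of atoms, $N$ a negative formula), identified with $B\wedge N\rightarrow A$; a logic program is a finite set of rules, identified with its ground instance. For a ground program $\Pi$, the reduct $\Pi^I$ consists of $A\leftarrow B$ for all rules $A\leftarrow B\wedge N$ in $\Pi$ with $I\models N$; $I$ is a (deterministic) stable model of $\Pi$ if $I$ is a minimal Herbrand model of $\Pi^I$. An $\mathrm{LP}^{\mathrm{MLN}}$ program $\Pi$ is a finite set of weighted rules $w:R$, $w$ a real number or the symbol $\alpha$ ("infinite weight"), identified with its ground instance (weights inherited). $\overline{\Pi}=\{R\mid w:R\in\Pi\}$; $\Pi_I=\{w:R\in\Pi\mid I\models R\}$; $\mathrm{SM}[\Pi]=\{I\mid I\text{ is a stable model of }\overline{\Pi_I}\}$.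 With $\alpha$ treated as a real parameter, the weight is $W_\Pi(I)=\exp(\sum_{w:R\in\Pi_I}w)$ if $I\in\mathrm{SM}[\Pi]$ and $0$ otherwise; the probability is $P_\Pi(I)=\lim_{\alpha\to\infty}W_\Pi(I)/\sum_{J\in\mathrm{SM}[\Pi]}W_\Pi(J)$. $I$ is a (probabilistic) stable model of $\Pi$ if $P_\Pi(I)\neq 0$. *)

theory Defs
  imports Complex_Main
begin

datatype 'a fm = Atom 'a | Bot | Top | Neg "'a fm" | Conj "'a fm" "'a fm"
  | Disj "'a fm" "'a fm" | Imp "'a fm" "'a fm"

fun sat :: "'a set \<Rightarrow> 'a fm \<Rightarrow> bool" where
  "sat I (Atom a) = (a \<in> I)"
| "sat I Bot = False"
| "sat I Top = True"
| "sat I (Neg f) = (\<not> sat I f)"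
| "sat I (Conj f g) = (sat I f \<and> sat I g)"
| "sat I (Disj f g) = (sat I f \<or> sat I g)"
| "sat I (Imp f g) = (sat I f \<longrightarrow> sat I g)"

fun negative :: "'a fm \<Rightarrow> bool" where
  "negative (Atom a) = False"
| "negative Bot = True"
| "negative Top = True"
| "negative (Neg f) = True"
| "negative (Conj f g) = (negative f \<and> negative g)"
| "negative (Disj f g) = (negative f \<and> negative g)"
| "negative (Imp f g) = (negative f \<and> negative g)"

text \<open>A ground rule  A <- B /\ N : head A (disjunction of atoms, possibly empty),
  positive body B (conjunction of atoms), negative formula N.\<close>
datatype 'a rule = Rule (head: "'a set") (pos: "'a set") (neg: "'a fm")

definition wf_rule :: "'a rule \<Rightarrow> bool" where
  "wf_rule r \<longleftrightarrow> finite (head r) \<and> finite (pos r) \<and> negative (neg r)"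

definition sat_rule :: "'a set \<Rightarrow> 'a rule \<Rightarrow> bool" where
  "sat_rule I r \<longleftrightarrow> (pos r \<subseteq> I \<and> sat I (neg r) \<longrightarrow> head r \<inter> I \<noteq> {})"

definition sat_prog :: "'a set \<Rightarrow> 'a rule set \<Rightarrow> bool" where
  "sat_prog I P \<longleftrightarrow> (\<forall>r\<in>P. sat_rule I r)"

definition reduct :: "'a rule set \<Rightarrow> 'a set \<Rightarrow> 'a rule set" where
  "reduct P I = {Rule (head r) (pos r) Top | r. r \<in> P \<and> sat I (neg r)}"

definition minimal_model :: "'a rule set \<Rightarrow> 'a set \<Rightarrow> bool" where
  "minimal_model P I \<longleftrightarrow> sat_prog I P \<and> (\<forall>J. J \<subset> I \<longrightarrow> \<not> sat_prog J P)"

definition stable :: "'a rule set \<Rightarrow> 'a set \<Rightarrow> bool" where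
  "stable P I \<longleftrightarrow> minimal_model (reduct P I) I"

datatype weight = Real real | Alpha

definition wval :: "real \<Rightarrow> weight \<Rightarrow> real" where
  "wval \<alpha> w = (case w of Real x \<Rightarrow> x | Alpha \<Rightarrow> \<alpha>)"

type_synonym 'a mln = "(weight \<times> 'a rule) set"

definition rules_of :: "'a mln \<Rightarrow> 'a rule set" where
  "rules_of \<Pi> = snd ` \<Pi>"

definition sat_part :: "'a mln \<Rightarrow> 'a set \<Rightarrow> 'a mln" where
  "sat_part \<Pi> I = {wr \<in> \<Pi>. sat_rule I (snd wr)}"

definition SM :: "'a mln \<Rightarrow> 'a set set" where
  "SM \<Pi> = {I. stable (rules_of (sat_part \<Pi> I)) I}"

text \<open>Weight, with the infinite weight alpha treated as a real parameter.\<close>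
definition W :: "'a mln \<Rightarrow> real \<Rightarrow> 'a set \<Rightarrow> real" where
  "W \<Pi> \<alpha> I = (if I \<in> SM \<Pi> then exp (\<Sum>wr\<in>sat_part \<Pi> I. wval \<alpha> (fst wr)) else 0)"

definition Prob :: "'a mln \<Rightarrow> 'a set \<Rightarrow> real" where
  "Prob \<Pi> I = Lim at_top (\<lambda>\<alpha>. W \<Pi> \<alpha> I / (\<Sum>J\<in>SM \<Pi>. W \<Pi> \<alpha> J))"

definition prob_stable :: "'a mln \<Rightarrow> 'a set \<Rightarrow> bool" where
  "prob_stable \<Pi> I \<longleftrightarrow> Prob \<Pi> I \<noteq> 0"

definition hard :: "'a rule set \<Rightarrow> 'a mln" where
  "hard \<Pi> = (\<lambda>r. (Alpha, r)) ` \<Pi>"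

end

theory Submission
  imports Defs
begin

text \<open>
  In the program with every weight \<open>\<alpha>\<close>, an interpretation \<open>I \<in> SM\<close> has weight
  \<open>exp (k\<^sub>I * \<alpha>)\<close>, where \<open>k\<^sub>I\<close> counts the rules satisfied by \<open>I\<close>. Hence \<open>k\<^sub>I = |\<Pi>|\<close> exactly when
  \<open>I\<close> satisfies all of \<open>\<Pi>\<close>, and then membership in \<open>SM\<close> says that \<open>I\<close> is a stable model of
  \<open>\<Pi>\<close>. Dividing by \<open>exp (K * \<alpha>)\<close> for the maximal exponent \<open>K\<close> shows that as \<open>\<alpha> \<rightarrow> \<infinity>\<close> the
  normalised weights tend to the uniform distribution on the members of \<open>SM\<close> with maximal
  exponent; if \<open>\<Pi>\<close> has a stable model, these are precisely the stable models of \<open>\<Pi>\<close>.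
\<close>

lemma tendsto_exp_mult_neg_at_top:
  fixes c :: real
  assumes "c < 0"
  shows "((\<lambda>x. exp (c * x)) \<longlongrightarrow> 0) at_top"
  by (rule filterlim_compose[OF exp_at_bot])
     (rule filterlim_tendsto_neg_mult_at_bot[OF tendsto_const assms filterlim_ident])

lemma tendsto_exp_ratio_at_top:
  fixes k :: "'b \<Rightarrow> real"
  assumes fin: "finite S" and le: "\<forall>J\<in>S. k J \<le> K" and max: "J\<^sub>0 \<in> S" "k J\<^sub>0 = K"
    and "k I \<le> K"
  shows "((\<lambda>\<alpha>. exp (k I * \<alpha>) / (\<Sum>J\<in>S. exp (k J * \<alpha>)))
          \<longlongrightarrow> (if k I = K then 1 / real (card {J\<in>S. k J = K}) else 0)) at_top"
proof -
  define g where "g J = (if k J = K then 1 else 0 :: real)" for J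
  have shift: "exp (k I * \<alpha>) / (\<Sum>J\<in>S. exp (k J * \<alpha>))
        = exp ((k I - K) * \<alpha>) / (\<Sum>J\<in>S. exp ((k J - K) * \<alpha>))" for \<alpha>
  proof -
    have "exp ((x - K) * \<alpha>) = exp (x * \<alpha>) * exp (- (K * \<alpha>))" for x
      by (simp add: exp_add[symmetric] algebra_simps)
    then show ?thesis
      by (simp add: sum_distrib_right[symmetric])
  qed
  have lim_term: "((\<lambda>\<alpha>. exp ((k J - K) * \<alpha>)) \<longlongrightarrow> g J) at_top" if "k J \<le> K" for J
  proof (cases "k J = K")
    case False
    with that have "k J - K < 0" by simp
    from tendsto_exp_mult_neg_at_top[OF this] show ?thesis
      using False by (simp add: g_def)
  qed (simp add: g_def)
  have sum_g: "(\<Sum>J\<in>S. g J) = real (card {J\<in>S. k J = K})"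
    unfolding g_def using fin by (simp add: sum.If_cases Int_def)
  have "card {J\<in>S. k J = K} \<noteq> 0"
    using fin max by auto
  then have "((\<lambda>\<alpha>. exp ((k I - K) * \<alpha>) / (\<Sum>J\<in>S. exp ((k J - K) * \<alpha>)))
          \<longlongrightarrow> g I / (\<Sum>J\<in>S. g J)) at_top"
    using le \<open>k I \<le> K\<close> sum_g by (intro tendsto_divide lim_term tendsto_sum) auto
  then show ?thesis
    unfolding shift sum_g by (cases "k I = K") (simp_all add: g_def)
qed

lemma stable_imp_sat_prog: "stable P I \<Longrightarrow> sat_prog I P"
  unfolding stable_def minimal_model_def sat_prog_def reduct_def sat_rule_def
  by fastforce

lemma stable_subset_heads:
  assumes "stable P I"
  shows "I \<subseteq> \<Union>(head ` P)"
proof (rule ccontr)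
  assume "\<not> I \<subseteq> \<Union>(head ` P)"
  then have "I \<inter> \<Union>(head ` P) \<subset> I" by auto
  moreover have "sat_prog I (reduct P I)"
    using assms unfolding stable_def minimal_model_def by simp
  then have "sat_prog (I \<inter> \<Union>(head ` P)) (reduct P I)"
    unfolding sat_prog_def reduct_def sat_rule_def by fastforce
  ultimately show False
    using assms unfolding stable_def minimal_model_def by blast
qed

lemma sat_part_hard: "sat_part (hard P) I = hard {r\<in>P. sat_rule I r}"
  unfolding sat_part_def hard_def by auto

lemma SM_hard: "I \<in> SM (hard P) \<longleftrightarrow> stable {r\<in>P. sat_rule I r} I"
proof -
  have "rules_of (hard Q) = Q" for Q :: "'a rule set"
    unfolding rules_of_def hard_def by force
  then show ?thesis
    unfolding SM_def sat_part_hard by simp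
qed

lemma W_hard:
  "W (hard P) \<alpha> I =
     (if I \<in> SM (hard P) then exp (real (card {r\<in>P. sat_rule I r}) * \<alpha>) else 0)"
proof -
  have "(\<Sum>wr\<in>hard Q. wval \<alpha> (fst wr)) = real (card Q) * \<alpha>" for Q :: "'a rule set"
    unfolding hard_def by (subst sum.reindex) (auto simp: inj_on_def wval_def)
  then show ?thesis
    unfolding W_def sat_part_hard by simp
qed

lemma stable_iff_SM_hard: "stable P I \<longleftrightarrow> I \<in> SM (hard P) \<and> sat_prog I P"
proof -
  have "sat_prog I P \<longleftrightarrow> {r\<in>P. sat_rule I r} = P"
    unfolding sat_prog_def by auto
  then show ?thesis
    using stable_imp_sat_prog[of P I] by (auto simp: SM_hard)
qed

lemma card_filter_eq_card_iff:
  assumes "finite A"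
  shows "card {x\<in>A. Q x} = card A \<longleftrightarrow> (\<forall>x\<in>A. Q x)"
proof
  assume "card {x\<in>A. Q x} = card A"
  with assms have "{x\<in>A. Q x} = A"
    by (intro card_subset_eq) auto
  then show "\<forall>x\<in>A. Q x" by blast
next
  assume "\<forall>x\<in>A. Q x"
  then have "{x\<in>A. Q x} = A" by blast
  then show "card {x\<in>A. Q x} = card A" by simp
qed

lemma stable_iff_SM_hard_card:
  assumes "finite P"
  shows "stable P I \<longleftrightarrow> I \<in> SM (hard P) \<and> card {r\<in>P. sat_rule I r} = card P"
  unfolding stable_iff_SM_hard sat_prog_def card_filter_eq_card_iff[OF assms] ..

lemma finite_SM_hard:
  assumes "finite P" and "\<forall>r\<in>P. finite (head r)"
  shows "finite (SM (hard P))"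
proof (rule finite_subset)
  show "SM (hard P) \<subseteq> Pow (\<Union>(head ` P))"
  proof
    fix I
    assume "I \<in> SM (hard P)"
    then have "I \<subseteq> \<Union>(head ` {r\<in>P. sat_rule I r})"
      unfolding SM_hard by (rule stable_subset_heads)
    then show "I \<in> Pow (\<Union>(head ` P))"
      by auto
  qed
  show "finite (Pow (\<Union>(head ` P)))"
    using assms by simp
qed

lemma Prob_hard:
  assumes fin: "finite P" and "\<forall>r\<in>P. finite (head r)" and "stable P J\<^sub>0"
  shows "Prob (hard P) I = (if stable P I then 1 / real (card {J. stable P J}) else 0)"
proof (cases "I \<in> SM (hard P)")
  case False
  then have "W (hard P) \<alpha> I = 0" for \<alpha>
    by (simp add: W_hard)
  with False show ?thesis
    unfolding Prob_def stable_iff_SM_hard by (simp add: tendsto_Lim)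
next
  case True
  define S where "S = SM (hard P)"
  define k where "k J = real (card {r\<in>P. sat_rule J r})" for J
  have k_le: "k J \<le> real (card P)" for J
    unfolding k_def using fin by (simp add: card_mono)
  have stable_iff: "stable P J \<longleftrightarrow> J \<in> S \<and> k J = real (card P)" for J
    unfolding S_def k_def of_nat_eq_iff by (rule stable_iff_SM_hard_card[OF fin])
  have W_S: "W (hard P) \<alpha> J = exp (k J * \<alpha>)" if "J \<in> S" for \<alpha> J
    using that unfolding S_def k_def by (simp add: W_hard)
  have stable_I: "stable P I \<longleftrightarrow> k I = real (card P)"
    using True stable_iff unfolding S_def by blast
  have maximisers: "{J\<in>S. k J = real (card P)} = {J. stable P J}"
    using stable_iff by auto
  have ratio: "(\<lambda>\<alpha>. W (hard P) \<alpha> I / (\<Sum>J\<in>S. W (hard P) \<alpha> J))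
      = (\<lambda>\<alpha>. exp (k I * \<alpha>) / (\<Sum>J\<in>S. exp (k J * \<alpha>)))"
    using True W_S unfolding S_def by (simp cong: sum.cong)
  have "((\<lambda>\<alpha>. exp (k I * \<alpha>) / (\<Sum>J\<in>S. exp (k J * \<alpha>))) \<longlongrightarrow>
          (if k I = real (card P) then 1 / real (card {J\<in>S. k J = real (card P)}) else 0)) at_top"
    using assms stable_iff k_le
    by (intro tendsto_exp_ratio_at_top) (auto simp: S_def finite_SM_hard)
  then show ?thesis
    unfolding Prob_def S_def[symmetric] ratio stable_I maximisers by (simp add: tendsto_Lim)
qed

theorem theorem1:
  fixes \<Pi> :: "'a rule set"
  assumes "finite \<Pi>" and "\<forall>r\<in>\<Pi>. wf_rule r"
  shows "(\<forall>I. stable \<Pi> I \<longleftrightarrow>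
            (prob_stable (hard \<Pi>) I \<and>
             (\<forall>\<alpha>. W (hard \<Pi>) \<alpha> I = exp (real (card \<Pi>) * \<alpha>))))
       \<and> ((\<exists>I. stable \<Pi> I) \<longrightarrow>
            (\<forall>I J. prob_stable (hard \<Pi>) I \<and> prob_stable (hard \<Pi>) J
                    \<longrightarrow> Prob (hard \<Pi>) I = Prob (hard \<Pi>) J)
          \<and> (\<forall>I. prob_stable (hard \<Pi>) I \<longleftrightarrow> stable \<Pi> I))"
proof -
  have heads: "\<forall>r\<in>\<Pi>. finite (head r)"
    using assms(2) by (simp add: wf_rule_def)
  have finite_stable: "finite {J. stable \<Pi> J}"
    using finite_SM_hard[OF assms(1) heads] by (rule rev_finite_subset) (auto simp: stable_iff_SM_hard)
  have prob_stable_iff: "prob_stable (hard \<Pi>) I \<longleftrightarrow> stable \<Pi> I" if "stable \<Pi> J\<^sub>0" for I J\<^sub>0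
    using Prob_hard[OF assms(1) heads that, of I] finite_stable that
    by (auto simp: prob_stable_def)
  have W_stable: "(\<forall>\<alpha>. W (hard \<Pi>) \<alpha> I = exp (real (card \<Pi>) * \<alpha>)) \<longleftrightarrow> stable \<Pi> I" for I
    using stable_iff_SM_hard_card[OF assms(1)] by (force simp: W_hard dest: spec[of _ 1])
  show ?thesis
    using prob_stable_iff W_stable Prob_hard[OF assms(1) heads] by metis
qed

end
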